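(* Let $U\subset\mathbb{C}$ be a simply connected domain. Let $\phi=(\phi_1,\phi_2,\phi_3):U\to\mathbb{C}^3$ be holomorphic with $\phi_2=\pm\mathrm{i}\phi_1$ (a fixed sign) and $\phi_1$ nowhere zero. Let $\mathbf{x}(z)=\mathrm{Re}\int_{z_0}^z\phi(w)\,\mathrm{d}w$, with $z=u+\mathrm{i}v$. Then $\mathbf{x}$ is an admissible simply isotropic minimal immersion, and: $$\mathrm{I}=|\phi_1|^2(\mathrm{d}u^2+\mathrm{d}v^2),$$ $$\mathrm{II}=\mathrm{Re}\Big[\phi_1\Big(\tfrac{\phi_3}{\phi_1}\Big)'\Big](\mathrm{d}u^2-\mathrm{d}v^2)-2\,\mathrm{Im}\Big[\phi_1\Big(\tfrac{\phi_3}{\phi_1}\Big)'\Big]\mathrm{d}u\,\mathrm{d}v,$$ $$K=-\Big|\frac{1}{\phi_1}\Big(\frac{\phi_3}{\phi_1}\Big)'\Big|^2.$$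
   Context: $\mathbb{I}^3$ is $\mathbb{R}^3$ with the degenerate metric $\langle a,b\rangle=a^1b^1+a^2b^2$. A surface is admissible if none of its tangent planes contains the vertical direction $(0,0,1)$. The first fundamental form has coefficients $g_{ij}=\langle\mathbf{x}_i,\mathbf{x}_j\rangle$, where $\mathbf{x}_1=\mathbf{x}_u$ and $\mathbf{x}_2=\mathbf{x}_v$. The minimal normal $\mathbf{N}_m$ is the unique vector of the form $(a,b,1)$ that is Euclidean-orthogonal to $\mathbf{x}_u$ and $\mathbf{x}_v$. The second fundamental form is $\mathrm{II}=h_{11}\mathrm{d}u^2+2h_{12}\mathrm{d}u\mathrm{d}v+h_{22}\mathrm{d}v^2$ with $h_{ij}=\mathbf{x}_{ij}\cdot\mathbf{N}_m$, where $\cdot$ is the Euclidean dot product. The isotropic Gaussian curvature is $K=(h_{11}h_{22}-h_{12}^2)/(g_{11}g_{22}-g_{12}^2)$. Minimal means the isotropic mean curvature $H=(g_{11}h_{22}-2g_{12}h_{12}+g_{22}h_{11})/(2\det g)$ vanishes. *)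

theory Defs
  imports "HOL-Complex_Analysis.Complex_Analysis"
begin

text \<open>Surfaces are maps from the parameter domain (a subset of the complex plane,
  z = u + i v) to real^3.  Partial derivatives with respect to u and v.\<close>

definition pu :: "(complex \<Rightarrow> real^3) \<Rightarrow> complex \<Rightarrow> real^3" where
  "pu f z = vector_derivative (\<lambda>t::real. f (z + of_real t)) (at 0)"

definition pv :: "(complex \<Rightarrow> real^3) \<Rightarrow> complex \<Rightarrow> real^3" where
  "pv f z = vector_derivative (\<lambda>t::real. f (z + \<i> * of_real t)) (at 0)"

definition iso_inner :: "real^3 \<Rightarrow> real^3 \<Rightarrow> real" where
  "iso_inner a b = a$1 * b$1 + a$2 * b$2"

definition g11 where "g11 x z = iso_inner (pu x z) (pu x z)"
definition g12 where "g12 x z = iso_inner (pu x z) (pv x z)"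
definition g22 where "g22 x z = iso_inner (pv x z) (pv x z)"

definition minimal_normal :: "(complex \<Rightarrow> real^3) \<Rightarrow> complex \<Rightarrow> real^3" where
  "minimal_normal x z = (THE N. N$3 = 1 \<and> N \<bullet> pu x z = 0 \<and> N \<bullet> pv x z = 0)"

definition h11 where "h11 x z = pu (pu x) z \<bullet> minimal_normal x z"
definition h12 where "h12 x z = pv (pu x) z \<bullet> minimal_normal x z"
definition h22 where "h22 x z = pv (pv x) z \<bullet> minimal_normal x z"

definition iso_K :: "(complex \<Rightarrow> real^3) \<Rightarrow> complex \<Rightarrow> real" where
  "iso_K x z = (h11 x z * h22 x z - (h12 x z)^2) / (g11 x z * g22 x z - (g12 x z)^2)"

definition iso_H :: "(complex \<Rightarrow> real^3) \<Rightarrow> complex \<Rightarrow> real" where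
  "iso_H x z = (g11 x z * h22 x z - 2 * g12 x z * h12 x z + g22 x z * h11 x z)
               / (2 * (g11 x z * g22 x z - (g12 x z)^2))"

definition immersion_on :: "complex set \<Rightarrow> (complex \<Rightarrow> real^3) \<Rightarrow> bool" where
  "immersion_on U x \<longleftrightarrow> (\<forall>z\<in>U. x differentiable (at z) \<and> inj (frechet_derivative x (at z)))"

definition admissible_on :: "complex set \<Rightarrow> (complex \<Rightarrow> real^3) \<Rightarrow> bool" where
  "admissible_on U x \<longleftrightarrow> (\<forall>z\<in>U. vector [0,0,1] \<notin> range (frechet_derivative x (at z)))"

definition iso_minimal_on :: "complex set \<Rightarrow> (complex \<Rightarrow> real^3) \<Rightarrow> bool" where
  "iso_minimal_on U x \<longleftrightarrow> (\<forall>z\<in>U. iso_H x z = 0)"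

text \<open>Integral from z0 to z along a (any) valid path inside U.\<close>
definition path_int :: "complex set \<Rightarrow> complex \<Rightarrow> (complex \<Rightarrow> complex) \<Rightarrow> complex \<Rightarrow> complex" where
  "path_int U z0 f z = contour_integral
      (SOME g. valid_path g \<and> path_image g \<subseteq> U \<and> pathstart g = z0 \<and> pathfinish g = z) f"

definition weierstrass_x ::
  "complex set \<Rightarrow> complex \<Rightarrow> (complex \<Rightarrow> complex) \<Rightarrow> (complex \<Rightarrow> complex) \<Rightarrow> (complex \<Rightarrow> complex)
    \<Rightarrow> complex \<Rightarrow> real^3" where
  "weierstrass_x U z0 \<phi>1 \<phi>2 \<phi>3 z =
     vector [Re (path_int U z0 \<phi>1 z), Re (path_int U z0 \<phi>2 z), Re (path_int U z0 \<phi>3 z)]"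

end

theory Submission
  imports Defs
begin

text \<open>On a simply connected domain each \<open>\<phi>\<^sub>k\<close> has a primitive, so \<open>x\<close> is the real part of a
  holomorphic curve with \<open>x\<^sub>u = Re \<phi>\<close>, \<open>x\<^sub>v = - Im \<phi>\<close>. The relation \<open>\<phi>\<^sub>2 = \<plusminus>i \<phi>\<^sub>1\<close> makes
  the top view of \<open>x\<close> a conformal map with factor \<open>|\<phi>\<^sub>1|\<^sup>2\<close>, and the minimal normal is
  \<open>(Re c, \<plusminus>Im c, 1)\<close> with \<open>c = - \<phi>\<^sub>3 / \<phi>\<^sub>1\<close>. Pairing it with the second derivatives
  gives \<open>h\<^sub>1\<^sub>1 = - h\<^sub>2\<^sub>2 = Re w\<close>, \<open>h\<^sub>1\<^sub>2 = - Im w\<close> for \<open>w = \<phi>\<^sub>1 (\<phi>\<^sub>3 / \<phi>\<^sub>1)'\<close>, from which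
  \<open>H = 0\<close> and \<open>K = - |w|\<^sup>2 / |\<phi>\<^sub>1|\<^sup>4\<close>.\<close>

lemma path_int_eq_primitive:
  assumes "open U" "connected U" "z0 \<in> U" "w \<in> U"
    and F: "\<And>z. z \<in> U \<Longrightarrow> (F has_field_derivative f z) (at z)"
  shows "path_int U z0 f w = F w - F z0"
proof -
  obtain g where "polynomial_function g" "path_image g \<subseteq> U" "pathstart g = z0" "pathfinish g = w"
    using connected_open_polynomial_connected[OF assms(1-4)] by blast
  then have "\<exists>g. valid_path g \<and> path_image g \<subseteq> U \<and> pathstart g = z0 \<and> pathfinish g = w"
    using valid_path_polynomial_function by blast
  then obtain \<gamma> where \<gamma>_def: "\<gamma> = (SOME g. valid_path g \<and> path_image g \<subseteq> U \<and> pathstart g = z0 \<and> pathfinish g = w)"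
    and \<gamma>: "valid_path \<gamma>" "path_image \<gamma> \<subseteq> U" "pathstart \<gamma> = z0" "pathfinish \<gamma> = w"
    by (metis (mono_tags, lifting) someI_ex)
  have "(f has_contour_integral (F (pathfinish \<gamma>) - F (pathstart \<gamma>))) \<gamma>"
    by (rule contour_integral_primitive[of U]) (use F \<gamma> in \<open>auto intro: has_field_derivative_at_within\<close>)
  then show ?thesis
    unfolding path_int_def \<gamma>_def[symmetric] using \<gamma> contour_integral_unique by auto
qed

lemma path_int_has_field_derivative:
  assumes "open U" "connected U" "simply_connected U" "z0 \<in> U" "f holomorphic_on U" "z \<in> U"
  shows "(path_int U z0 f has_field_derivative f z) (at z)"
proof -
  obtain F where F: "\<And>z. z \<in> U \<Longrightarrow> (F has_field_derivative f z) (at z)"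
    using simply_connected_eq_global_primitive assms(1,3,5) by blast
  have "((\<lambda>w. F w - F z0) has_field_derivative f z) (at z)"
    using F[OF \<open>z \<in> U\<close>] by (auto intro!: derivative_eq_intros)
  then show ?thesis
    by (rule has_field_derivative_transform_within_open[OF _ \<open>open U\<close> \<open>z \<in> U\<close>])
       (use path_int_eq_primitive[OF assms(1,2,4) _ F] in auto)
qed

lemma vector_derivative_along_line:
  assumes "(f has_derivative D) (at z)"
  shows "vector_derivative (\<lambda>t. f (z + t *\<^sub>R d)) (at 0) = D d"
proof -
  have "((\<lambda>t. z + t *\<^sub>R d) has_derivative (\<lambda>t. t *\<^sub>R d)) (at 0)"
    by (auto intro!: derivative_eq_intros)
  from has_derivative_compose[OF this] assms
  have "((\<lambda>t. f (z + t *\<^sub>R d)) has_derivative (\<lambda>t. D (t *\<^sub>R d))) (at 0)"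
    by simp
  moreover have "D (t *\<^sub>R d) = t *\<^sub>R D d" for t
    using has_derivative_linear[OF assms] by (simp add: linear_scale)
  ultimately show ?thesis
    by (intro vector_derivative_at) (simp add: has_vector_derivative_def)
qed

lemma pu_pv_has_derivative:
  assumes "(f has_derivative D) (at z)"
  shows "pu f z = D 1" "pv f z = D \<i>"
  using vector_derivative_along_line[OF assms, of 1] vector_derivative_along_line[OF assms, of \<i>]
  by (simp_all add: pu_def pv_def scaleR_conv_of_real mult.commute)

lemma has_derivative_Re_vector:
  assumes "(f1 has_field_derivative a) (at z)" "(f2 has_field_derivative b) (at z)"
    "(f3 has_field_derivative c) (at z)"
  shows "((\<lambda>w. vector [Re (f1 w), Re (f2 w), Re (f3 w)] :: real^3) has_derivative
          (\<lambda>h. vector [Re (a * h), Re (b * h), Re (c * h)])) (at z)"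
proof -
  have split: "(vector [r1, r2, r3] :: real^3) =
      r1 *\<^sub>R vector [1,0,0] + r2 *\<^sub>R vector [0,1,0] + r3 *\<^sub>R vector [0,0,1]" for r1 r2 r3
    by (simp add: vec_eq_iff forall_3)
  have "((\<lambda>w. Re (f1 w) *\<^sub>R vector [1,0,0] + Re (f2 w) *\<^sub>R vector [0,1,0]
            + Re (f3 w) *\<^sub>R (vector [0,0,1] :: real^3)) has_derivative
        (\<lambda>h. Re (a * h) *\<^sub>R vector [1,0,0] + Re (b * h) *\<^sub>R vector [0,1,0]
            + Re (c * h) *\<^sub>R vector [0,0,1])) (at z)"
    by (intro has_derivative_add has_derivative_scaleR_left has_derivative_Re
        has_field_derivative_imp_has_derivative assms)
  then show ?thesis
    by (simp only: split[symmetric])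
qed

lemma pu_pv_Re_vector:
  assumes "(f has_derivative (\<lambda>h. vector [Re (a * h), Re (b * h), Re (c * h)])) (at z)"
  shows "pu f z = vector [Re a, Re b, Re c]"
    and "pv f z = vector [Re (a * \<i>), Re (b * \<i>), Re (c * \<i>)]"
  using pu_pv_has_derivative[OF assms] by simp_all

lemma mult_deriv_divide:
  assumes "(f has_field_derivative f') (at z)" "(g has_field_derivative g') (at z)" "g z \<noteq> 0"
  shows "g z * deriv (\<lambda>w. f w / g w) z = f' - g' * f z / g z"
proof -
  have "deriv (\<lambda>w. f w / g w) z = (f' * g z - f z * g') / (g z * g z)"
    using assms by (intro DERIV_imp_deriv DERIV_divide)
  with assms(3) show ?thesis
    by (simp add: field_simps)
qed

text \<open>Turns the two orthogonality conditions defining the minimal normal into the single complex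
  equation \<open>(N\<^sub>1 + i s N\<^sub>2) \<phi>\<^sub>1 + \<phi>\<^sub>3 = 0\<close>.\<close>

lemma inner_lift_Re_vector:
  fixes s a b :: complex and N :: "real^3"
  assumes "s = 1 \<or> s = -1" "N$3 = 1"
  shows "N \<bullet> vector [Re a, Re (s * \<i> * a), Re b] = Re ((N$1 + \<i> * s * N$2) * a + b)"
  using assms by (auto simp: inner_vec_def sum_3 algebra_simps)

lemma minimal_normal_eq:
  fixes s p q :: complex
  assumes s: "s = 1 \<or> s = -1" and p: "p \<noteq> 0"
    and pu: "pu x z = vector [Re p, Re (s * \<i> * p), Re q]"
    and pv: "pv x z = vector [Re (p * \<i>), Re (s * \<i> * p * \<i>), Re (q * \<i>)]"
  shows "minimal_normal x z = vector [- Re (q / p), - Re s * Im (q / p), 1]"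
proof -
  have "N$3 = 1 \<and> N \<bullet> pu x z = 0 \<and> N \<bullet> pv x z = 0 \<longleftrightarrow> N = vector [- Re (q / p), - Re s * Im (q / p), 1]"
    for N :: "real^3"
  proof -
    define \<nu> where "\<nu> = N$1 + \<i> * s * N$2"
    have "N \<bullet> pu x z = Re (\<nu> * p + q) \<and> N \<bullet> pv x z = - Im (\<nu> * p + q)" if "N$3 = 1"
      using inner_lift_Re_vector[OF s that, of p q] inner_lift_Re_vector[OF s that, of "p * \<i>" "q * \<i>"]
      by (simp add: pu pv \<nu>_def algebra_simps)
    then have "N$3 = 1 \<and> N \<bullet> pu x z = 0 \<and> N \<bullet> pv x z = 0 \<longleftrightarrow> N$3 = 1 \<and> \<nu> * p + q = 0"
      by (auto simp: complex_eq_iff)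
    also have "\<dots> \<longleftrightarrow> N$3 = 1 \<and> \<nu> = - q / p"
      using p by (auto simp: eq_divide_eq add_eq_0_iff)
    also have "\<dots> \<longleftrightarrow> N = vector [- Re (q / p), - Re s * Im (q / p), 1]"
      using s by (auto simp: \<nu>_def complex_eq_iff vec_eq_iff forall_3)
    finally show ?thesis .
  qed
  then show ?thesis
    unfolding minimal_normal_def by simp
qed

lemma first_fundamental_form_conformal:
  fixes s p q :: complex
  assumes s: "s = 1 \<or> s = -1"
    and pu: "pu x z = vector [Re p, Re (s * \<i> * p), Re q]"
    and pv: "pv x z = vector [Re (p * \<i>), Re (s * \<i> * p * \<i>), Re (q * \<i>)]"
  shows "g11 x z = (cmod p)\<^sup>2" "g12 x z = 0" "g22 x z = (cmod p)\<^sup>2"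
proof -
  have "(cmod p)\<^sup>2 = Re p * Re p + Im p * Im p"
    using cmod_power2[of p] by (simp add: power2_eq_square)
  with s show "g11 x z = (cmod p)\<^sup>2" "g12 x z = 0" "g22 x z = (cmod p)\<^sup>2"
    by (auto simp: g11_def g12_def g22_def iso_inner_def pu pv algebra_simps)
qed

lemma second_fundamental_form_eq:
  fixes s p q p' q' :: complex
  assumes s: "s = 1 \<or> s = -1" and p: "p \<noteq> 0"
    and pu: "pu x z = vector [Re p, Re (s * \<i> * p), Re q]"
    and pv: "pv x z = vector [Re (p * \<i>), Re (s * \<i> * p * \<i>), Re (q * \<i>)]"
    and puu: "pu (pu x) z = vector [Re p', Re (s * \<i> * p'), Re q']"
    and pvu: "pv (pu x) z = vector [Re (p' * \<i>), Re (s * \<i> * p' * \<i>), Re (q' * \<i>)]"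
    and pvv: "pv (pv x) z = vector [- Re p', - Re (s * \<i> * p'), - Re q']"
  defines "w \<equiv> q' - p' * q / p"
  shows "h11 x z = Re w" "h12 x z = - Im w" "h22 x z = - Re w"
proof -
  let ?N = "minimal_normal x z"
  have N: "?N$3 = 1" "?N$1 + \<i> * s * ?N$2 = - q / p"
    using s by (auto simp: minimal_normal_eq[OF s p pu pv] complex_eq_iff)
  have h: "h11 x z = ?N \<bullet> vector [Re p', Re (s * \<i> * p'), Re q']"
    "h12 x z = ?N \<bullet> vector [Re (p' * \<i>), Re (s * \<i> * (p' * \<i>)), Re (q' * \<i>)]"
    "h22 x z = ?N \<bullet> vector [Re (- p'), Re (s * \<i> * - p'), Re (- q')]"
    by (simp_all add: h11_def h12_def h22_def puu pvu pvv inner_commute)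
  have "- q / p * p' + q' = w" "- q / p * (p' * \<i>) + q' * \<i> = w * \<i>" "- q / p * - p' + - q' = - w"
    using p by (simp_all add: w_def field_simps)
  then show "h11 x z = Re w" "h12 x z = - Im w" "h22 x z = - Re w"
    unfolding h inner_lift_Re_vector[OF s N(1)] N(2) by simp_all
qed

lemma isotropic_curvatures_conformal:
  assumes "g11 x z = r" "g12 x z = 0" "g22 x z = r"
    and "h11 x z = Re w" "h12 x z = - Im w" "h22 x z = - Re w"
  shows "iso_H x z = 0" "iso_K x z = - (cmod w)\<^sup>2 / r\<^sup>2"
proof -
  have "(cmod w)\<^sup>2 = Re w * Re w + Im w * Im w"
    using cmod_power2[of w] by (simp add: power2_eq_square)
  with assms show "iso_H x z = 0" "iso_K x z = - (cmod w)\<^sup>2 / r\<^sup>2"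
    by (simp_all add: iso_H_def iso_K_def power2_eq_square minus_divide_left)
qed

lemma top_view_injective:
  fixes s p h :: complex
  assumes "s = 1 \<or> s = -1" "p \<noteq> 0" "Re (p * h) = 0" "Re (s * \<i> * p * h) = 0"
  shows "h = 0"
proof -
  have "Im (p * h) = 0"
    using assms by (auto simp: algebra_simps)
  with assms(3) have "p * h = 0"
    by (simp add: complex_eq_iff)
  with assms(2) show ?thesis
    by simp
qed

lemma Re_vector_differential_inj:
  fixes s p q :: complex
  assumes "s = 1 \<or> s = -1" "p \<noteq> 0"
  shows "inj (\<lambda>h. vector [Re (p * h), Re (s * \<i> * p * h), Re (q * h)] :: real^3)"
proof (rule injI)
  fix h1 h2
  assume "(vector [Re (p * h1), Re (s * \<i> * p * h1), Re (q * h1)] :: real^3) =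
          vector [Re (p * h2), Re (s * \<i> * p * h2), Re (q * h2)]"
  then have "Re (p * (h1 - h2)) = 0" "Re (s * \<i> * p * (h1 - h2)) = 0"
    by (auto simp: vec_eq_iff forall_3 algebra_simps)
  then have "h1 - h2 = 0"
    by (rule top_view_injective[OF assms])
  then show "h1 = h2"
    by simp
qed

lemma vertical_notin_range_Re_vector_differential:
  fixes s p q :: complex
  assumes "s = 1 \<or> s = -1" "p \<noteq> 0"
  shows "vector [0, 0, 1] \<notin> range (\<lambda>h. vector [Re (p * h), Re (s * \<i> * p * h), Re (q * h)] :: real^3)"
proof
  assume "vector [0, 0, 1] \<in> range (\<lambda>h. vector [Re (p * h), Re (s * \<i> * p * h), Re (q * h)] :: real^3)"
  then obtain h where "Re (p * h) = 0" "Re (s * \<i> * p * h) = 0" "Re (q * h) = 1"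
    by (auto simp: vec_eq_iff forall_3)
  moreover from calculation(1,2) have "h = 0"
    by (rule top_view_injective[OF assms])
  ultimately show False
    by simp
qed

context
  fixes U :: "complex set" and z0 :: complex and \<phi>1 \<phi>2 \<phi>3 :: "complex \<Rightarrow> complex"
  assumes U: "open U" "connected U" "simply_connected U" "z0 \<in> U"
    and holo: "\<phi>1 holomorphic_on U" "\<phi>2 holomorphic_on U" "\<phi>3 holomorphic_on U"
begin

lemma weierstrass_x_has_derivative:
  assumes "z \<in> U"
  shows "(weierstrass_x U z0 \<phi>1 \<phi>2 \<phi>3 has_derivative
          (\<lambda>h. vector [Re (\<phi>1 z * h), Re (\<phi>2 z * h), Re (\<phi>3 z * h)])) (at z)"
  unfolding weierstrass_x_def[abs_def]
  by (intro has_derivative_Re_vector path_int_has_field_derivative U holo assms)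

lemma weierstrass_x_first_partials:
  assumes "z \<in> U"
  shows "pu (weierstrass_x U z0 \<phi>1 \<phi>2 \<phi>3) z = vector [Re (\<phi>1 z), Re (\<phi>2 z), Re (\<phi>3 z)]"
    and "pv (weierstrass_x U z0 \<phi>1 \<phi>2 \<phi>3) z =
           vector [Re (\<phi>1 z * \<i>), Re (\<phi>2 z * \<i>), Re (\<phi>3 z * \<i>)]"
  using pu_pv_Re_vector[OF weierstrass_x_has_derivative[OF assms]] by simp_all

lemma Re_vector_scaled_has_derivative:
  assumes z: "z \<in> U"
  shows "((\<lambda>w. vector [Re (\<phi>1 w * c), Re (\<phi>2 w * c), Re (\<phi>3 w * c)] :: real^3) has_derivative
          (\<lambda>h. vector [Re (deriv \<phi>1 z * c * h), Re (deriv \<phi>2 z * c * h),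
                       Re (deriv \<phi>3 z * c * h)])) (at z)"
proof -
  have "((\<lambda>w. \<phi> w * c) has_field_derivative deriv \<phi> z * c) (at z)"
    if "\<phi> holomorphic_on U" for \<phi>
    using holomorphic_derivI[OF that \<open>open U\<close> z] by (auto intro!: derivative_eq_intros)
  with holo show ?thesis
    by (intro has_derivative_Re_vector) auto
qed

lemma weierstrass_x_first_partials_has_derivative:
  assumes z: "z \<in> U"
  shows "(pu (weierstrass_x U z0 \<phi>1 \<phi>2 \<phi>3) has_derivative
          (\<lambda>h. vector [Re (deriv \<phi>1 z * h), Re (deriv \<phi>2 z * h), Re (deriv \<phi>3 z * h)])) (at z)"
    and "(pv (weierstrass_x U z0 \<phi>1 \<phi>2 \<phi>3) has_derivative
          (\<lambda>h. vector [Re (deriv \<phi>1 z * \<i> * h), Re (deriv \<phi>2 z * \<i> * h),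
                       Re (deriv \<phi>3 z * \<i> * h)])) (at z)"
  using Re_vector_scaled_has_derivative[OF z, of 1] Re_vector_scaled_has_derivative[OF z, of \<i>]
  by (auto elim!: has_derivative_transform_within_open[OF _ \<open>open U\<close> z]
           simp: weierstrass_x_first_partials)

lemma weierstrass_x_second_partials:
  assumes "z \<in> U"
  defines "x \<equiv> weierstrass_x U z0 \<phi>1 \<phi>2 \<phi>3"
  shows "pu (pu x) z = vector [Re (deriv \<phi>1 z), Re (deriv \<phi>2 z), Re (deriv \<phi>3 z)]"
    and "pv (pu x) z = vector [Re (deriv \<phi>1 z * \<i>), Re (deriv \<phi>2 z * \<i>), Re (deriv \<phi>3 z * \<i>)]"
    and "pv (pv x) z = vector [- Re (deriv \<phi>1 z), - Re (deriv \<phi>2 z), - Re (deriv \<phi>3 z)]"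
  using pu_pv_Re_vector[OF weierstrass_x_first_partials_has_derivative(1)[OF assms(1)]]
    pu_pv_Re_vector(2)[OF weierstrass_x_first_partials_has_derivative(2)[OF assms(1)]]
  by (simp_all add: x_def)

context
  fixes s :: complex
  assumes s: "s = 1 \<or> s = -1"
    and \<phi>2: "\<forall>z\<in>U. \<phi>2 z = s * \<i> * \<phi>1 z"
    and \<phi>1: "\<forall>z\<in>U. \<phi>1 z \<noteq> 0"
begin

lemma deriv_isotropic_component:
  assumes "z \<in> U"
  shows "deriv \<phi>2 z = s * \<i> * deriv \<phi>1 z"
proof -
  have "deriv \<phi>2 z = deriv (\<lambda>w. s * \<i> * \<phi>1 w) z"
    using eventually_nhds_in_open[OF \<open>open U\<close> assms] \<phi>2
    by (auto elim!: eventually_mono intro!: deriv_cong_ev)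
  then show ?thesis
    using holomorphic_on_imp_differentiable_at[OF holo(1) \<open>open U\<close> assms] by simp
qed

lemma weierstrass_x_frechet_derivative:
  assumes "z \<in> U"
  shows "weierstrass_x U z0 \<phi>1 \<phi>2 \<phi>3 differentiable at z"
    and "frechet_derivative (weierstrass_x U z0 \<phi>1 \<phi>2 \<phi>3) (at z) =
           (\<lambda>h. vector [Re (\<phi>1 z * h), Re (s * \<i> * \<phi>1 z * h), Re (\<phi>3 z * h)])"
  using weierstrass_x_has_derivative[OF assms] \<phi>2 assms
  by (auto intro: differentiableI simp: frechet_derivative_at[symmetric])

lemma weierstrass_x_immersion: "immersion_on U (weierstrass_x U z0 \<phi>1 \<phi>2 \<phi>3)"
  using weierstrass_x_frechet_derivative Re_vector_differential_inj[OF s] \<phi>1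
  by (simp add: immersion_on_def)

lemma weierstrass_x_admissible: "admissible_on U (weierstrass_x U z0 \<phi>1 \<phi>2 \<phi>3)"
  using weierstrass_x_frechet_derivative vertical_notin_range_Re_vector_differential[OF s] \<phi>1
  by (simp add: admissible_on_def)

lemma weierstrass_x_fundamental_forms:
  assumes z: "z \<in> U"
  defines "x \<equiv> weierstrass_x U z0 \<phi>1 \<phi>2 \<phi>3"
    and "w \<equiv> \<phi>1 z * deriv (\<lambda>w. \<phi>3 w / \<phi>1 w) z"
  shows "g11 x z = (cmod (\<phi>1 z))\<^sup>2" "g12 x z = 0" "g22 x z = (cmod (\<phi>1 z))\<^sup>2"
    and "h11 x z = Re w" "h12 x z = - Im w" "h22 x z = - Re w"
proof -
  have p: "\<phi>1 z \<noteq> 0"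
    using \<phi>1 z by blast
  note first = weierstrass_x_first_partials[OF z, folded x_def, unfolded \<phi>2[rule_format, OF z]]
  note second = weierstrass_x_second_partials[OF z, folded x_def, unfolded deriv_isotropic_component[OF z]]
  have "w = deriv \<phi>3 z - deriv \<phi>1 z * \<phi>3 z / \<phi>1 z"
    unfolding w_def using holomorphic_derivI[OF holo(3) \<open>open U\<close> z] holomorphic_derivI[OF holo(1) \<open>open U\<close> z] p
    by (rule mult_deriv_divide)
  then show "g11 x z = (cmod (\<phi>1 z))\<^sup>2" "g12 x z = 0" "g22 x z = (cmod (\<phi>1 z))\<^sup>2"
    and "h11 x z = Re w" "h12 x z = - Im w" "h22 x z = - Re w"
    using first_fundamental_form_conformal[OF s first] second_fundamental_form_eq[OF s p first second]
    by simp_all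
qed

end

end

theorem mainTheorem5:
  fixes U :: "complex set" and z0 :: complex and s :: complex
    and \<phi>1 \<phi>2 \<phi>3 :: "complex \<Rightarrow> complex"
  assumes "open U" and "connected U" and "simply_connected U" and "z0 \<in> U"
    and "\<phi>1 holomorphic_on U" and "\<phi>2 holomorphic_on U" and "\<phi>3 holomorphic_on U"
    and "s = 1 \<or> s = -1"
    and "\<forall>z\<in>U. \<phi>2 z = s * \<i> * \<phi>1 z"
    and "\<forall>z\<in>U. \<phi>1 z \<noteq> 0"
  defines "x \<equiv> weierstrass_x U z0 \<phi>1 \<phi>2 \<phi>3"
  shows "immersion_on U x \<and> admissible_on U x \<and> iso_minimal_on U x \<and>
    (\<forall>z\<in>U.
       g11 x z = (cmod (\<phi>1 z))^2 \<and> g12 x z = 0 \<and> g22 x z = (cmod (\<phi>1 z))^2 \<and>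
       h11 x z = Re (\<phi>1 z * deriv (\<lambda>w. \<phi>3 w / \<phi>1 w) z) \<and>
       h22 x z = - Re (\<phi>1 z * deriv (\<lambda>w. \<phi>3 w / \<phi>1 w) z) \<and>
       h12 x z = - Im (\<phi>1 z * deriv (\<lambda>w. \<phi>3 w / \<phi>1 w) z) \<and>
       iso_K x z = - ((cmod ((1 / \<phi>1 z) * deriv (\<lambda>w. \<phi>3 w / \<phi>1 w) z))^2))"
proof -
  note weierstrass = assms(1-10)
  have forms: "g11 x z = (cmod (\<phi>1 z))\<^sup>2" "g12 x z = 0" "g22 x z = (cmod (\<phi>1 z))\<^sup>2"
    "h11 x z = Re (\<phi>1 z * deriv (\<lambda>w. \<phi>3 w / \<phi>1 w) z)"
    "h12 x z = - Im (\<phi>1 z * deriv (\<lambda>w. \<phi>3 w / \<phi>1 w) z)"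
    "h22 x z = - Re (\<phi>1 z * deriv (\<lambda>w. \<phi>3 w / \<phi>1 w) z)" if "z \<in> U" for z
    using weierstrass_x_fundamental_forms[OF weierstrass that] by (simp_all add: x_def)
  note curvatures = isotropic_curvatures_conformal[OF forms]
  have "(cmod ((1 / \<phi>1 z) * deriv (\<lambda>w. \<phi>3 w / \<phi>1 w) z))\<^sup>2 =
      (cmod (\<phi>1 z * deriv (\<lambda>w. \<phi>3 w / \<phi>1 w) z))\<^sup>2 / ((cmod (\<phi>1 z))\<^sup>2)\<^sup>2" if "z \<in> U" for z
    using assms(10) that by (simp add: norm_divide norm_mult power_mult_distrib field_simps)
  then show ?thesis
    using weierstrass_x_immersion[OF weierstrass] weierstrass_x_admissible[OF weierstrass]
      forms curvatures
    by (simp add: x_def iso_minimal_on_def)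
qed

end
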